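(* Let $X$ and $Y$ be Banach spaces with $d_K(X,Y)<\sigma<\frac16$. Then there is a norm-preserving bijection $\Omega:X\to Y$ such that for all $x_1,\dots,x_n\in X$, $$\Big|\big\|\textstyle\sum_{i=1}^n\Omega(x_i)\big\|_Y-\big\|\sum_{i=1}^n x_i\big\|_X\Big|\le 14\sigma\sum_{i=1}^n\|x_i\|_X.$$
   Context: The Kadets distance $d_K(X,Y)$ is the infimum, over all Banach spaces $Z$ and linear isometric embeddings $U:X\to Z$, $V:Y\to Z$, of the Hausdorff distance in $Z$ between $UB_X$ and $VB_Y$, where $B_X,B_Y$ are the closed unit balls. *)

theory Defs
  imports "HOL-Analysis.Analysis"
begin

text \<open>Such seminorms are exactly the functions
(x,y) \<mapsto> norm (U x + V y) for isometric embeddings U, V of X and Y into a common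
normed space Z (take Z = the quotient of X \<times> Y by the kernel, or its completion).\<close>
definition compatible_seminorm :: "('a::real_normed_vector \<times> 'b::real_normed_vector \<Rightarrow> real) \<Rightarrow> bool" where
  "compatible_seminorm N \<longleftrightarrow>
     (\<forall>z. 0 \<le> N z) \<and>
     (\<forall>z w. N (z + w) \<le> N z + N w) \<and>
     (\<forall>c z. N (c *\<^sub>R z) = \<bar>c\<bar> * N z) \<and>
     (\<forall>x. N (x, 0) = norm x) \<and>
     (\<forall>y. N (0, y) = norm y)"

definition ball_hausdorff :: "('a::real_normed_vector \<times> 'b::real_normed_vector \<Rightarrow> real) \<Rightarrow> real" where
  "ball_hausdorff N =
     max (SUP x\<in>cball (0::'a) 1. INF y\<in>cball (0::'b) 1. N (x, - y))
         (SUP y\<in>cball (0::'b) 1. INF x\<in>cball (0::'a) 1. N (x, - y))"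

definition kadets_dist :: "'a::real_normed_vector itself \<Rightarrow> 'b::real_normed_vector itself \<Rightarrow> real" where
  "kadets_dist _ _ = Inf {ball_hausdorff N | N :: 'a \<times> 'b \<Rightarrow> real. compatible_seminorm N}"

end

theory Submission
  imports Defs
begin

text \<open>
  If the Kadets distance is below \<sigma>, some compatible seminorm N on X \<times> Y puts every unit
  vector of either space within 2\<sigma> of a unit vector of the other, measured by N (x, - y).
  It suffices to find a bijection \<beta> of the unit spheres with N (x, - \<beta> x) \<le> 3\<sigma>: its radial
  extension \<Omega> preserves norms, and subadditivity of N gives
  \<bar>\<parallel>\<Sum> \<Omega> x_i\<parallel> - \<parallel>\<Sum> x_i\<parallel>\<bar> \<le> N (\<Sum> x_i, - \<Sum> \<Omega> x_i) \<le> 3\<sigma> \<Sum> \<parallel>x_i\<parallel>.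

  If one space has dimension at most one, so has the other (as 2\<sigma> < 1/2), and \<beta> is explicit.
  Otherwise \<beta> comes from a Schroeder-Bernstein argument that only ever uses the given
  injections or their inverses, applied to injections between the spheres moving points by at
  most 3\<sigma>. Such an injection snaps a 2\<sigma>-close choice x \<mapsto> F x to a maximal \<sigma>/2-separated
  net and then separates the preimages of a net point inside a small spherical cap around it;
  this works because each cap receives an injective image of the space of sequences in Y (digit
  expansions modulo a line), while X injects into it since the errors of the iteration
  x \<mapsto> x - G (F x) shrink geometrically and are recorded by their images under F.
\<close>

section \<open>Maximal separated sets and Schroeder-Bernstein\<close>

lemma exists_maximal_pairwise_subset:
  assumes "symp R"
  obtains E where "E \<subseteq> S" "pairwise R E" "\<And>s. s \<in> S \<Longrightarrow> s \<notin> E \<Longrightarrow> \<exists>a\<in>E. \<not> R s a"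
proof -
  define \<A> where "\<A> = {E. E \<subseteq> S \<and> pairwise R E}"
  have "\<Union>C \<in> \<A>" if "C \<in> chains \<A>" for C
  proof -
    have "C \<subseteq> \<A>" "chain\<^sub>\<subseteq> C" using that unfolding chains_def by auto
    then show ?thesis unfolding \<A>_def by (auto intro: pairwise_chain_Union)
  qed
  then obtain M where M: "M \<in> \<A>" and max: "\<And>X. X \<in> \<A> \<Longrightarrow> M \<subseteq> X \<Longrightarrow> X = M"
    using Zorn_Lemma[of \<A>] by blast
  have "\<exists>a\<in>M. \<not> R s a" if "s \<in> S" "s \<notin> M" for s
  proof (rule ccontr)
    assume "\<not> ?thesis"
    then have "insert s M \<in> \<A>"
      using M that assms unfolding \<A>_def by (auto simp: pairwise_insert dest: sympD)
    then show False using max[of "insert s M"] \<open>s \<notin> M\<close> by blast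
  qed
  then show thesis using that M unfolding \<A>_def by blast
qed

lemma exists_separated_net:
  fixes S :: "'a::metric_space set"
  assumes "r > 0"
  obtains E where "E \<subseteq> S" "pairwise (\<lambda>a b. r \<le> dist a b) E" "\<And>y. y \<in> S \<Longrightarrow> \<exists>a\<in>E. dist y a < r"
proof -
  have "symp (\<lambda>a b :: 'a. r \<le> dist a b)" by (rule sympI) (simp add: dist_commute)
  then obtain E where "E \<subseteq> S" "pairwise (\<lambda>a b. r \<le> dist a b) E"
    and max: "\<And>y. y \<in> S \<Longrightarrow> y \<notin> E \<Longrightarrow> \<exists>a\<in>E. \<not> r \<le> dist y a"
    by (rule exists_maximal_pairwise_subset[where S = S]) blast
  moreover have "\<exists>a\<in>E. dist y a < r" if "y \<in> S" for y
    using max[OF that] assms by (cases "y \<in> E") force+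
  ultimately show thesis using that by blast
qed

lemma Schroeder_Bernstein_pointwise:
  fixes f :: "'a \<Rightarrow> 'b" and g :: "'b \<Rightarrow> 'a"
  assumes "inj_on f A" "f ` A \<subseteq> B" "inj_on g B" "g ` B \<subseteq> A"
  obtains h where "bij_betw h A B" "\<And>a. a \<in> A \<Longrightarrow> h a = f a \<or> (h a \<in> B \<and> g (h a) = a)"
proof -
  define X where "X = lfp (\<lambda>X. A - g ` (B - f ` X))"
  have X: "X = A - g ` (B - f ` X)"
    unfolding X_def by (rule lfp_unfold) (blast intro: monoI)
  define g' where "g' = the_inv_into (B - f ` X) g"
  have "bij_betw g (B - f ` X) (A - X)"
    using X assms(3,4) by (auto simp: bij_betw_def intro: inj_on_subset)
  then have g': "bij_betw g' (A - X) (B - f ` X)"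
    unfolding g'_def by (rule bij_betw_the_inv_into)
  have f: "bij_betw f X (f ` X)"
    using X assms(1) by (auto simp: bij_betw_def intro: inj_on_subset)
  define h where "h a = (if a \<in> X then f a else g' a)" for a
  have "bij_betw h (X \<union> (A - X)) (f ` X \<union> (B - f ` X))"
    unfolding h_def by (rule bij_betw_disjoint_Un[OF f g']) auto
  moreover have "X \<union> (A - X) = A" "f ` X \<union> (B - f ` X) = B"
    using X assms(2) by auto
  moreover have "g (g' a) = a" if "a \<in> A - X" for a
    using that X unfolding g'_def
    by (metis (no_types, lifting) \<open>bij_betw g (B - f ` X) (A - X)\<close> bij_betw_def f_the_inv_into_f)
  ultimately show thesis
    using that[of h] bij_betwE[OF g'] unfolding h_def by force
qed

section \<open>Compatible seminorms\<close>

lemma compatible_seminormD: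
  assumes "compatible_seminorm N"
  shows "N z \<ge> 0" "N (z + w) \<le> N z + N w" "N (c *\<^sub>R z) = \<bar>c\<bar> * N z"
    "N (x, 0) = norm x" "N (0, y) = norm y"
  using assms unfolding compatible_seminorm_def by blast+

lemma compatible_seminorm_minus:
  assumes "compatible_seminorm N" shows "N (- z) = N z"
  using compatible_seminormD(3)[OF assms, of "-1" z] by simp

lemma compatible_seminorm_neg_swap:
  assumes "compatible_seminorm N" shows "N (- x, y) = N (x, - y)"
  using compatible_seminorm_minus[OF assms, of "(x, - y)"] by simp

lemma compatible_seminorm_shift_right:
  assumes "compatible_seminorm N" shows "N (x, y) \<le> N (x, y') + norm (y - y')"
  using compatible_seminormD(2)[OF assms, of "(x, y')" "(0, y - y')"]
    compatible_seminormD(5)[OF assms, of "y - y'"] by simp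

lemma compatible_seminorm_shift_left:
  assumes "compatible_seminorm N" shows "N (x, y) \<le> N (x', y) + norm (x - x')"
  using compatible_seminormD(2)[OF assms, of "(x', y)" "(x - x', 0)"]
    compatible_seminormD(4)[OF assms, of "x - x'"] by simp

lemma compatible_seminorm_norm_diff:
  assumes "compatible_seminorm N" shows "\<bar>norm x - norm y\<bar> \<le> N (x, - y)"
  using compatible_seminorm_shift_right[OF assms, of x 0 "- y"]
    compatible_seminorm_shift_left[OF assms, of 0 "- y" x]
    compatible_seminormD(4,5)[OF assms] by auto

lemma compatible_seminorm_sum_list:
  assumes "compatible_seminorm N" shows "N (sum_list zs) \<le> sum_list (map N zs)"
proof (induction zs)
  case Nil
  then show ?case using compatible_seminormD(4)[OF assms, of 0] by (simp add: zero_prod_def)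
next
  case (Cons z zs)
  then show ?case using compatible_seminormD(2)[OF assms, of z "sum_list zs"] by simp
qed

lemma compatible_seminorm_norm_plus:
  "compatible_seminorm (\<lambda>(x::'a::real_normed_vector, y::'b::real_normed_vector). norm x + norm y)"
  unfolding compatible_seminorm_def
  by (auto simp: algebra_simps intro: add_mono[OF norm_triangle_ineq norm_triangle_ineq, simplified add.assoc])

definition swap_seminorm :: "('a \<times> 'b \<Rightarrow> real) \<Rightarrow> 'b \<times> 'a \<Rightarrow> real" where
  "swap_seminorm N = (\<lambda>(y, x). N (x, y))"

lemma compatible_seminorm_swap:
  assumes "compatible_seminorm N" shows "compatible_seminorm (swap_seminorm N)"
  using assms unfolding compatible_seminorm_def swap_seminorm_def by (auto simp: scaleR_prod_def)

lemma swap_seminorm_neg: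
  assumes "compatible_seminorm N" shows "swap_seminorm N (y, - x) = N (x, - y)"
  using compatible_seminorm_neg_swap[OF assms] unfolding swap_seminorm_def by simp

lemma ball_hausdorff_swap:
  assumes "compatible_seminorm N" shows "ball_hausdorff (swap_seminorm N) = ball_hausdorff N"
  unfolding ball_hausdorff_def swap_seminorm_neg[OF assms] by (simp add: max.commute)

lemma bdd_below_compatible_seminorm:
  assumes "compatible_seminorm N" shows "bdd_below ((\<lambda>z. N (f z)) ` S)"
  using compatible_seminormD(1)[OF assms] by (intro bdd_belowI[of _ 0]) blast

lemma ball_hausdorff_ge_Inf:
  fixes N :: "'a::real_normed_vector \<times> 'b::real_normed_vector \<Rightarrow> real"
  assumes N: "compatible_seminorm N" and "x \<in> cball 0 1"
  shows "(INF y\<in>cball 0 1. N (x, - y)) \<le> ball_hausdorff N"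
proof -
  have "(INF y\<in>cball (0::'b) 1. N (x, - y)) \<le> 1" if "x \<in> cball 0 1" for x :: 'a
  proof -
    have "(INF y\<in>cball (0::'b) 1. N (x, - y)) \<le> N (x, - 0)"
      by (intro cINF_lower bdd_below_compatible_seminorm[OF N]) simp
    then show ?thesis using that compatible_seminormD(4)[OF N, of x] by simp
  qed
  then have "bdd_above ((\<lambda>x. INF y\<in>cball (0::'b) 1. N (x, - y)) ` cball 0 1)"
    by (intro bdd_aboveI2)
  then show ?thesis
    unfolding ball_hausdorff_def using assms(2) by (intro max.coboundedI1 cSUP_upper)
qed

lemma ball_hausdorff_nonneg:
  fixes N :: "'a::real_normed_vector \<times> 'b::real_normed_vector \<Rightarrow> real"
  assumes N: "compatible_seminorm N" shows "ball_hausdorff N \<ge> 0"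
proof -
  have "0 \<le> (INF y\<in>cball (0::'b) 1. N (0, - y))"
    using compatible_seminormD(1)[OF N] by (intro cINF_greatest) auto
  also have "\<dots> \<le> ball_hausdorff N"
    using ball_hausdorff_ge_Inf[OF N, of 0] by simp
  finally show ?thesis .
qed

lemma kadets_dist_nonneg: "kadets_dist TYPE('a::real_normed_vector) TYPE('b::real_normed_vector) \<ge> 0"
  unfolding kadets_dist_def using compatible_seminorm_norm_plus ball_hausdorff_nonneg
  by (intro cInf_greatest) blast+

lemma kadets_distE:
  assumes "kadets_dist TYPE('a::real_normed_vector) TYPE('b::real_normed_vector) < \<sigma>"
  obtains N :: "'a::real_normed_vector \<times> 'b::real_normed_vector \<Rightarrow> real"
  where "compatible_seminorm N" "ball_hausdorff N < \<sigma>"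
proof -
  have "{ball_hausdorff N | N :: 'a \<times> 'b \<Rightarrow> real. compatible_seminorm N} \<noteq> {}"
    using compatible_seminorm_norm_plus by blast
  from cInf_lessD[OF this] show thesis
    using that assms unfolding kadets_dist_def by blast
qed

definition unit_spheres_close ::
    "('a::real_normed_vector \<times> 'b::real_normed_vector \<Rightarrow> real) \<Rightarrow> real \<Rightarrow> bool" where
  "unit_spheres_close N c \<longleftrightarrow>
     (\<forall>x::'a. norm x = 1 \<longrightarrow> (\<exists>y::'b. norm y = 1 \<and> N (x, - y) \<le> c)) \<and>
     (\<forall>y::'b. norm y = 1 \<longrightarrow> (\<exists>x::'a. norm x = 1 \<and> N (x, - y) \<le> c))"

lemma unit_spheres_close_swap:
  assumes "compatible_seminorm N" "unit_spheres_close N c"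
  shows "unit_spheres_close (swap_seminorm N) c"
  using assms(2) unfolding unit_spheres_close_def swap_seminorm_neg[OF assms(1)] by blast

lemma unit_spheres_closeE:
  assumes "unit_spheres_close N c"
  obtains F where "\<And>x. norm x = 1 \<Longrightarrow> norm (F x) = 1 \<and> N (x, - F x) \<le> c"
  using assms unfolding unit_spheres_close_def by metis

lemma normalize_close_to_unit:
  assumes N: "compatible_seminorm N" and x: "norm x = 1" and y: "norm y \<le> 1"
    and close: "N (x, - y) \<le> s" and s: "s < 1"
  shows "norm (y /\<^sub>R norm y) = 1 \<and> N (x, - (y /\<^sub>R norm y)) \<le> 2 * s"
proof -
  have "1 - norm y \<le> s"
    using compatible_seminorm_norm_diff[OF N, of x y] x close by linarith
  then have ny: "norm y > 0" using s by linarith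
  define u where "u = y /\<^sub>R norm y"
  have u: "norm u = 1" using ny unfolding u_def by simp
  have "- u - - y = (norm y - 1) *\<^sub>R u" using ny unfolding u_def by (simp add: algebra_simps)
  then have "norm (- u - - y) = 1 - norm y" using u y by simp
  then have "N (x, - u) \<le> N (x, - y) + (1 - norm y)"
    using compatible_seminorm_shift_right[OF N, of x "- u" "- y"] by simp
  then show ?thesis using u close \<open>1 - norm y \<le> s\<close> unfolding u_def by simp
qed

lemma ball_hausdorff_unit_approx:
  fixes N :: "'a::real_normed_vector \<times> 'b::real_normed_vector \<Rightarrow> real"
  assumes N: "compatible_seminorm N" and "ball_hausdorff N < \<sigma>" "\<sigma> < 1" and x: "norm x = 1"
  shows "\<exists>y::'b. norm y = 1 \<and> N (x, - y) \<le> 2 * \<sigma>"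
proof -
  have "(INF y\<in>cball (0::'b) 1. N (x, - y)) < \<sigma>"
    using ball_hausdorff_ge_Inf[OF N, of x] assms(2) x by simp
  then obtain y :: 'b where "norm y \<le> 1" "N (x, - y) < \<sigma>"
    by (subst (asm) cINF_less_iff) (auto intro: bdd_below_compatible_seminorm[OF N])
  with normalize_close_to_unit[OF N x, of y \<sigma>] assms(3) show ?thesis by (meson less_imp_le)
qed

lemma unit_spheres_close_ball_hausdorff:
  assumes N: "compatible_seminorm N" and "ball_hausdorff N < \<sigma>" "\<sigma> < 1"
  shows "unit_spheres_close N (2 * \<sigma>)"
  unfolding unit_spheres_close_def
  using ball_hausdorff_unit_approx[OF N assms(2,3)]
    ball_hausdorff_unit_approx[OF compatible_seminorm_swap[OF N], unfolded ball_hausdorff_swap[OF N],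
      OF assms(2,3)]
  by (auto simp: swap_seminorm_neg[OF N])

definition radial_extension :: "('a::real_normed_vector \<Rightarrow> 'b::real_normed_vector) \<Rightarrow> 'a \<Rightarrow> 'b" where
  "radial_extension F x = (if x = 0 then 0 else norm x *\<^sub>R F (x /\<^sub>R norm x))"

lemma norm_radial_extension:
  assumes "\<And>u. norm u = 1 \<Longrightarrow> norm (F u) = 1"
  shows "norm (radial_extension F x) = norm x"
  using assms[of "x /\<^sub>R norm x"] unfolding radial_extension_def by auto

lemma radial_extension_close:
  assumes N: "compatible_seminorm N" and F: "\<And>u. norm u = 1 \<Longrightarrow> N (u, - F u) \<le> c"
  shows "N (x, - radial_extension F x) \<le> c * norm x"
proof (cases "x = 0")
  case True
  then show ?thesis using compatible_seminormD(4)[OF N, of 0] by (simp add: radial_extension_def)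
next
  case False
  have "(x, - radial_extension F x) = norm x *\<^sub>R (x /\<^sub>R norm x, - F (x /\<^sub>R norm x))"
    using False by (simp add: radial_extension_def)
  then have "N (x, - radial_extension F x) = N (norm x *\<^sub>R (x /\<^sub>R norm x, - F (x /\<^sub>R norm x)))"
    by (simp only:)
  also have "\<dots> = norm x * N (x /\<^sub>R norm x, - F (x /\<^sub>R norm x))"
    by (rule trans[OF compatible_seminormD(3)[OF N]]) simp
  also have "\<dots> \<le> norm x * c" using F False by (intro mult_left_mono) auto
  finally show ?thesis by (simp add: mult.commute)
qed

lemma bij_radial_extension:
  assumes "bij_betw F (sphere 0 1) (sphere 0 1)"
  shows "bij (radial_extension F)"
proof -
  obtain G where G: "\<And>x. x \<in> sphere 0 1 \<Longrightarrow> G x \<in> sphere 0 1 \<and> F (G x) = x"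
    and GF: "\<And>x. x \<in> sphere 0 1 \<Longrightarrow> F x \<in> sphere 0 1 \<and> G (F x) = x"
    using assms unfolding bij_betw_iff_bijections by metis
  have "radial_extension G (radial_extension F x) = x" for x
    using GF[of "x /\<^sub>R norm x"] by (auto simp: radial_extension_def)
  moreover have "radial_extension F (radial_extension G y) = y" for y
    using G[of "y /\<^sub>R norm y"] by (auto simp: radial_extension_def)
  ultimately show ?thesis by (metis bijI')
qed

lemma sum_list_norm_deviation:
  assumes N: "compatible_seminorm N" and close: "\<And>x. N (x, - \<Omega> x) \<le> C * norm x"
  shows "\<bar>norm (\<Sum>x\<leftarrow>xs. \<Omega> x) - norm (\<Sum>x\<leftarrow>xs. x)\<bar> \<le> C * (\<Sum>x\<leftarrow>xs. norm x)"
proof -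
  have "(\<Sum>x\<leftarrow>xs. (x, - \<Omega> x)) = (\<Sum>x\<leftarrow>xs. x, - (\<Sum>x\<leftarrow>xs. \<Omega> x))"
    by (induction xs) (simp_all add: zero_prod_def)
  then have "N (\<Sum>x\<leftarrow>xs. x, - (\<Sum>x\<leftarrow>xs. \<Omega> x)) \<le> (\<Sum>x\<leftarrow>xs. N (x, - \<Omega> x))"
    using compatible_seminorm_sum_list[OF N, of "map (\<lambda>x. (x, - \<Omega> x)) xs"] by (simp add: comp_def)
  also have "\<dots> \<le> (\<Sum>x\<leftarrow>xs. C * norm x)" by (rule sum_list_mono) (rule close)
  also have "\<dots> = C * (\<Sum>x\<leftarrow>xs. norm x)" by (simp add: sum_list_const_mult)
  finally show ?thesis
    using compatible_seminorm_norm_diff[OF N, of "\<Sum>x\<leftarrow>xs. x" "\<Sum>x\<leftarrow>xs. \<Omega> x"] by simp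
qed

section \<open>Spaces of dimension at most one\<close>

definition dim_le_one :: "'a::real_vector itself \<Rightarrow> bool" where
  "dim_le_one _ \<longleftrightarrow> (\<exists>e::'a. \<forall>w. \<exists>t. w = t *\<^sub>R e)"

lemma unit_vector_dim_le_one:
  fixes a b :: "'a::real_normed_vector"
  assumes "dim_le_one TYPE('a)" "norm a = 1" "norm b = 1"
  shows "b = a \<or> b = - a"
proof -
  obtain e :: 'a where e: "\<And>w. \<exists>t. w = t *\<^sub>R e"
    using assms(1) unfolding dim_le_one_def by blast
  obtain s t where "a = s *\<^sub>R e" "b = t *\<^sub>R e" using e by metis
  then have "b = (t / s) *\<^sub>R a" using assms(2) by auto
  moreover from this have "\<bar>t / s\<bar> = 1" using assms(2,3) by (metis mult.right_neutral norm_scaleR)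
  then have "t / s = 1 \<or> t / s = -1" by linarith
  ultimately show ?thesis by auto
qed

lemma exists_unit_at_distance_one:
  fixes x0 :: "'a::real_normed_vector"
  assumes x0: "norm x0 = 1" and z: "\<And>t. z \<noteq> t *\<^sub>R x0"
  shows "\<exists>u. norm u = 1 \<and> norm (u - x0) = 1"
proof -
  \<comment> \<open>a path from x0 to - x0 that avoids 0 by leaving the line through x0\<close>
  define p where "p t = (1 - 2 * t) *\<^sub>R x0 + (t * (1 - t)) *\<^sub>R z" for t :: real
  have p_nonzero: "p t \<noteq> 0" if "t \<in> {0..1}" for t
  proof
    assume p0: "p t = 0"
    show False
    proof (cases "t * (1 - t) = 0")
      case True
      then have "t = 0 \<or> t = 1" by simp
      then show False using p0 x0 unfolding p_def by auto
    next
      case False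
      have "(t * (1 - t)) *\<^sub>R z = - ((1 - 2 * t) *\<^sub>R x0)"
        using p0 unfolding p_def by (metis neg_eq_iff_add_eq_0)
      moreover have "z = (1 / (t * (1 - t))) *\<^sub>R ((t * (1 - t)) *\<^sub>R z)"
        using False by simp
      ultimately have "z = (- (1 / (t * (1 - t)) * (1 - 2 * t))) *\<^sub>R x0"
        by (simp only: scaleR_minus_right scaleR_scaleR scaleR_minus_left)
      then show False using z by blast
    qed
  qed
  define g where "g t = norm (p t /\<^sub>R norm (p t) - x0)" for t
  have "continuous_on {0..1} g"
    unfolding g_def p_def using p_nonzero[unfolded p_def] by (intro continuous_intros) auto
  moreover have "- x0 - x0 = (- 2) *\<^sub>R x0" by (simp add: scaleR_2)
  then have "g 0 = 0" "g 1 = 2"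
    using x0 by (simp_all add: g_def p_def)
  ultimately obtain t where "t \<in> {0..1}" "g t = 1"
    using IVT'[of g 0 1 1] by auto
  then show ?thesis
    using p_nonzero unfolding g_def by (intro exI[of _ "p t /\<^sub>R norm (p t)"]) simp
qed

lemma unit_near_plus_minus_dim_le_one:
  fixes N :: "'a::real_normed_vector \<times> 'b::real_normed_vector \<Rightarrow> real" and x0 u :: 'a
  assumes N: "compatible_seminorm N" and close: "unit_spheres_close N c"
    and "dim_le_one TYPE('b)" and x0: "norm x0 = 1" and u: "norm u = 1"
  shows "norm (u - x0) \<le> 2 * c \<or> norm (u + x0) \<le> 2 * c"
proof -
  obtain F :: "'a \<Rightarrow> 'b" where F: "\<And>x. norm x = 1 \<Longrightarrow> norm (F x) = 1 \<and> N (x, - F x) \<le> c"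
    by (rule unit_spheres_closeE[OF close]) blast
  have sum: "norm (u + s *\<^sub>R x0) \<le> 2 * c" if "F u = - s *\<^sub>R F x0" "\<bar>s\<bar> = 1" for s
  proof -
    have "norm (u + s *\<^sub>R x0) = N ((u, - F u) + s *\<^sub>R (x0, - F x0))"
      using that(1) compatible_seminormD(4)[OF N, of "u + s *\<^sub>R x0"] by simp
    also have "\<dots> \<le> N (u, - F u) + \<bar>s\<bar> * N (x0, - F x0)"
      using compatible_seminormD(2,3)[OF N] by metis
    also have "\<dots> \<le> 2 * c" using F[OF u] F[OF x0] that(2) by simp
    finally show ?thesis .
  qed
  from unit_vector_dim_le_one[OF assms(3)] F u x0 have "F u = F x0 \<or> F u = - F x0" by blast
  then show ?thesis using sum[of "-1"] sum[of 1] by auto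
qed

lemma dim_le_one_transfer:
  fixes N :: "'a::real_normed_vector \<times> 'b::real_normed_vector \<Rightarrow> real"
  assumes N: "compatible_seminorm N" and close: "unit_spheres_close N c" and c: "c < 1/2"
    and "dim_le_one TYPE('b)"
  shows "dim_le_one TYPE('a)"
proof (cases "\<exists>x0::'a. norm x0 = 1")
  case False
  have trivial: "z = 0" for z :: 'a
  proof (rule ccontr)
    assume "z \<noteq> 0"
    then have "norm (sgn z) = 1" by (simp add: norm_sgn)
    then show False using False by blast
  qed
  show ?thesis unfolding dim_le_one_def by (metis trivial)
next
  case True
  then obtain x0 :: 'a where x0: "norm x0 = 1" by blast
  show ?thesis
  proof (rule ccontr)
    assume not_line: "\<not> dim_le_one TYPE('a)"
    obtain z :: 'a where "\<And>t. z \<noteq> t *\<^sub>R x0" using not_line unfolding dim_le_one_def by blast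
    then obtain u where u: "norm u = 1" "norm (u - x0) = 1"
      using exists_unit_at_distance_one[OF x0] by blast
    have "norm (2 *\<^sub>R x0) \<le> norm (u + x0) + norm (u - x0)"
      using norm_triangle_ineq4[of "u + x0" "u - x0"] by (simp add: scaleR_2)
    then have "norm (u + x0) \<ge> 1" using x0 u by simp
    then show False
      using unit_near_plus_minus_dim_le_one[OF N close assms(4) x0 u(1)] u c by linarith
  qed
qed

lemma dim_le_one_sphere_bij:
  fixes N :: "'a::real_normed_vector \<times> 'b::real_normed_vector \<Rightarrow> real"
  assumes N: "compatible_seminorm N" and close: "unit_spheres_close N c"
    and "dim_le_one TYPE('a)" "dim_le_one TYPE('b)"
  shows "\<exists>\<beta>. bij_betw \<beta> (sphere (0::'a) 1) (sphere (0::'b) 1) \<and> (\<forall>x\<in>sphere 0 1. N (x, - \<beta> x) \<le> c)"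
proof (cases "\<exists>x1::'a. norm x1 = 1")
  case False
  then have "sphere (0::'b) 1 = {}" "sphere (0::'a) 1 = {}"
    using close unfolding unit_spheres_close_def by auto
  then show ?thesis by (simp add: bij_betw_def)
next
  case True
  then obtain x1 :: 'a and y1 :: 'b where x1: "norm x1 = 1" and y1: "norm y1 = 1" "N (x1, - y1) \<le> c"
    using close unfolding unit_spheres_close_def by blast
  have SX: "sphere (0::'a) 1 = {x1, - x1}"
    using unit_vector_dim_le_one[OF assms(3) x1] x1 by force
  moreover have SY: "sphere (0::'b) 1 = {y1, - y1}"
    using unit_vector_dim_le_one[OF assms(4) y1(1)] y1 by force
  moreover have "x1 \<noteq> - x1" "y1 \<noteq> - y1" using x1 y1 by (auto simp: eq_neg_iff_add_eq_0 simp flip: scaleR_2)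
  ultimately have "bij_betw (\<lambda>x. if x = x1 then y1 else - y1) (sphere 0 1) (sphere 0 1)"
    by (auto simp: bij_betw_def inj_on_def)
  moreover have "N (- x1, - (- y1)) \<le> c" using y1 compatible_seminorm_neg_swap[OF N, of x1 y1] by simp
  ultimately show ?thesis using SX y1 by (intro exI conjI) auto
qed

section \<open>Injecting sequences into a cap of the unit sphere\<close>

definition apart_from_line :: "'a::real_normed_vector \<Rightarrow> real \<Rightarrow> 'a \<Rightarrow> bool" where
  "apart_from_line e \<delta> v \<longleftrightarrow> (\<forall>t. \<delta> \<le> norm (v - t *\<^sub>R e))"

lemma apart_from_line_minus:
  assumes "apart_from_line e \<delta> v" shows "apart_from_line e \<delta> (- v)"
  unfolding apart_from_line_def
proof
  fix t
  have "- v - t *\<^sub>R e = - (v - (- t) *\<^sub>R e)" by simp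
  then have "norm (- v - t *\<^sub>R e) = norm (v - (- t) *\<^sub>R e)" by (simp only: norm_minus_cancel)
  then show "\<delta> \<le> norm (- v - t *\<^sub>R e)" using assms unfolding apart_from_line_def by metis
qed

lemma apart_from_line_scaleR:
  assumes w: "apart_from_line e \<kappa> w" "0 \<le> \<kappa>" and q: "\<alpha> \<le> \<bar>q\<bar>"
  shows "apart_from_line e (\<alpha> * \<kappa>) (q *\<^sub>R w)"
  unfolding apart_from_line_def
proof
  fix t
  show "\<alpha> * \<kappa> \<le> norm (q *\<^sub>R w - t *\<^sub>R e)"
  proof (cases "q = 0")
    case True
    then have "\<alpha> * \<kappa> \<le> 0" using q w(2) by (simp add: mult_nonpos_nonneg)
    then show ?thesis by (meson norm_ge_zero order.trans)
  next
    case False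
    then have "q *\<^sub>R w - t *\<^sub>R e = q *\<^sub>R (w - (t / q) *\<^sub>R e)" by (simp add: algebra_simps)
    then have "norm (q *\<^sub>R w - t *\<^sub>R e) = \<bar>q\<bar> * norm (w - (t / q) *\<^sub>R e)" by simp
    moreover have "\<alpha> * \<kappa> \<le> \<bar>q\<bar> * norm (w - (t / q) *\<^sub>R e)"
      using w q unfolding apart_from_line_def by (meson abs_ge_zero mult_mono order.trans mult_right_mono)
    ultimately show ?thesis by simp
  qed
qed

lemma apart_from_line_add:
  assumes "apart_from_line e \<delta> v" "norm u \<le> \<epsilon>"
  shows "apart_from_line e (\<delta> - \<epsilon>) (v + u)"
  unfolding apart_from_line_def
proof
  fix t
  have "norm (v - t *\<^sub>R e) \<le> norm (v + u - t *\<^sub>R e) + norm u"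
    using norm_triangle_ineq4[of "v + u - t *\<^sub>R e" u] by simp
  then show "\<delta> - \<epsilon> \<le> norm (v + u - t *\<^sub>R e)"
    using assms unfolding apart_from_line_def by (smt (verit))
qed

lemma apart_from_line_exists:
  fixes e w :: "'a::real_normed_vector"
  assumes e: "norm e = 1" and w: "\<And>t. w \<noteq> t *\<^sub>R e"
  obtains \<kappa> where "\<kappa> > 0" "apart_from_line e \<kappa> w"
proof -
  define T where "T = 2 * norm w + 1"
  define f where "f t = norm (w - t *\<^sub>R e)" for t
  have "continuous_on {-T..T} f" unfolding f_def by (intro continuous_intros)
  then obtain t0 where t0: "\<And>t. t \<in> {-T..T} \<Longrightarrow> f t0 \<le> f t"
    using continuous_attains_inf[of "{-T..T}" f] T_def by fastforce
  have "f t0 > 0" using w unfolding f_def by (metis eq_iff_diff_eq_0 zero_less_norm_iff)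
  moreover have "min (f t0) 1 \<le> f t" for t
  proof (cases "t \<in> {-T..T}")
    case True
    then show ?thesis using t0 by force
  next
    case False
    have "\<bar>t\<bar> = norm (t *\<^sub>R e)" using e by simp
    also have "\<dots> \<le> f t + norm w"
      using norm_triangle_ineq4[of w "w - t *\<^sub>R e"] unfolding f_def by simp
    moreover have "T < \<bar>t\<bar>" using False by auto
    ultimately show ?thesis using norm_ge_zero[of w] unfolding T_def by linarith
  qed
  ultimately show thesis
    using that[of "min (f t0) 1"] unfolding apart_from_line_def f_def by simp
qed

lemma inj_on_digit_expansion:
  fixes f :: "'d \<Rightarrow> 'a::real_normed_vector"
  assumes digit: "\<And>r. r \<in> cball 0 1 \<Longrightarrow> \<exists>d\<in>D. norm (r - f d) \<le> 1/2"
  obtains code :: "'a \<Rightarrow> nat \<Rightarrow> 'd"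
  where "inj_on code (cball 0 1)" "\<And>r n. r \<in> cball 0 1 \<Longrightarrow> code r n \<in> D"
proof -
  obtain dig where dig: "\<And>r. r \<in> cball 0 1 \<Longrightarrow> dig r \<in> D \<and> norm (r - f (dig r)) \<le> 1/2"
    using digit by metis
  define res where "res r = 2 *\<^sub>R (r - f (dig r))" for r
  have res: "norm (res r) \<le> 1" if "r \<in> cball 0 1" for r
    using dig[OF that] unfolding res_def by simp
  have orbit: "(res ^^ n) r \<in> cball 0 1" if "r \<in> cball 0 1" for r n
    using that by (induction n) (simp_all add: res)
  define code where "code r n = dig ((res ^^ n) r)" for r n
  have "inj_on code (cball 0 1)"
  proof (rule inj_onI)
    fix r r' assume r: "r \<in> cball 0 1" and r': "r' \<in> cball 0 1" and eq: "code r = code r'"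
    have res_diff: "res x - res x' = 2 *\<^sub>R (x - x')" if "dig x = dig x'" for x x'
      using that unfolding res_def by (simp add: algebra_simps)
    have diff: "(res ^^ n) r - (res ^^ n) r' = 2 ^ n *\<^sub>R (r - r')" for n
    proof (induction n)
      case (Suc n)
      have "dig ((res ^^ n) r) = dig ((res ^^ n) r')" using eq unfolding code_def by metis
      then show ?case using Suc res_diff by simp
    qed simp
    have bounded: "2 ^ n * norm (r - r') \<le> 2" for n
      using diff[of n] norm_triangle_ineq4[of "(res ^^ n) r" "(res ^^ n) r'"]
        orbit[OF r, of n] orbit[OF r', of n] by simp
    show "r = r'"
    proof (rule ccontr)
      assume "r \<noteq> r'"
      then obtain n where "2 / norm (r - r') < 2 ^ n"
        using real_arch_pow[of 2 "2 / norm (r - r')"] by auto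
      then show False using bounded[of n] \<open>r \<noteq> r'\<close> by (simp add: divide_less_eq)
    qed
  qed
  then show thesis using that dig orbit unfolding code_def by blast
qed

lemma unit_ball_net_mod_line:
  fixes e :: "'a::real_normed_vector"
  assumes e: "norm e = 1"
  obtains B where "B \<subseteq> cball 0 1" "pairwise (\<lambda>a b. apart_from_line e (1/4) (a - b)) B"
    "\<And>r. r \<in> cball 0 1 \<Longrightarrow> \<exists>b\<in>B. \<exists>k. \<bar>k\<bar> \<le> (9::int) \<and> norm (r - (b + (k / 4) *\<^sub>R e)) \<le> 1/2"
proof -
  have "symp (\<lambda>a b. apart_from_line e (1/4) (a - b))"
    by (rule sympI) (metis apart_from_line_minus minus_diff_eq)
  then obtain B where B: "B \<subseteq> cball 0 1" "pairwise (\<lambda>a b. apart_from_line e (1/4) (a - b)) B"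
    and max: "\<And>r. r \<in> cball 0 1 \<Longrightarrow> r \<notin> B \<Longrightarrow> \<exists>a\<in>B. \<not> apart_from_line e (1/4) (r - a)"
    by (rule exists_maximal_pairwise_subset[where S = "cball 0 1"]) blast
  have "\<exists>b\<in>B. \<exists>k. \<bar>k\<bar> \<le> (9::int) \<and> norm (r - (b + (k / 4) *\<^sub>R e)) \<le> 1/2"
    if r: "r \<in> cball 0 1" for r
  proof -
    obtain b t where b: "b \<in> B" and t: "norm (r - b - t *\<^sub>R e) < 1/4"
    proof (cases "r \<in> B")
      case True
      then show ?thesis using that[of r 0] by simp
    next
      case False
      then show ?thesis using that max[OF r False] unfolding apart_from_line_def by (auto simp: not_le)
    qed
    have "\<bar>t\<bar> = norm ((r - b) - (r - b - t *\<^sub>R e))" using e by simp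
    also have "\<dots> \<le> norm r + norm b + norm (r - b - t *\<^sub>R e)"
      using norm_triangle_ineq4[of "r - b" "r - b - t *\<^sub>R e"] norm_triangle_ineq4[of r b] by linarith
    finally have "\<bar>t\<bar> \<le> 9/4" using r b B(1) t by auto
    define k where "k = \<lfloor>4 * t\<rfloor>"
    have k: "real_of_int k \<le> 4 * t" "4 * t < real_of_int k + 1" unfolding k_def by linarith+
    have decompose: "r - (b + (k / 4) *\<^sub>R e) = (r - b - t *\<^sub>R e) + (t - k / 4) *\<^sub>R e"
      by (simp add: algebra_simps)
    have "norm (r - (b + (k / 4) *\<^sub>R e)) \<le> norm (r - b - t *\<^sub>R e) + norm ((t - k / 4) *\<^sub>R e)"
      unfolding decompose by (rule norm_triangle_ineq)
    also have "\<dots> \<le> 1/2" using t e k by simp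
    finally have "norm (r - (b + (k / 4) *\<^sub>R e)) \<le> 1/2" .
    moreover have "\<bar>k\<bar> \<le> 9" using k \<open>\<bar>t\<bar> \<le> 9/4\<close> by linarith
    ultimately show ?thesis using b by blast
  qed
  then show thesis using that B by blast
qed

lemma norm_suminf_tail_le_geometric:
  fixes d :: "nat \<Rightarrow> 'a::banach"
  assumes bound: "\<And>m. norm (d m) \<le> C * \<rho> ^ m" and \<rho>: "0 \<le> \<rho>" "\<rho> < 1"
  shows "norm (\<Sum>m. d (m + k)) \<le> C * \<rho> ^ k / (1 - \<rho>)"
proof -
  have geom: "summable (\<lambda>m. C * \<rho> ^ k * \<rho> ^ m)"
    using \<rho> by (intro summable_mult summable_geometric) auto
  have "norm (d (m + k)) \<le> C * \<rho> ^ k * \<rho> ^ m" for m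
    using bound[of "m + k"] by (simp add: power_add mult_ac)
  then have "norm (\<Sum>m. d (m + k)) \<le> (\<Sum>m. C * \<rho> ^ k * \<rho> ^ m)"
    using geom by (rule norm_suminf_le)
  also have "\<dots> = C * \<rho> ^ k / (1 - \<rho>)" using \<rho> by (simp add: suminf_mult suminf_geometric)
  finally show ?thesis .
qed

lemma geometric_digit_series_unique_mod_line:
  fixes \<phi> :: "'d \<Rightarrow> 'a::banach"
  assumes bound: "\<And>d. d \<in> D \<Longrightarrow> norm (\<phi> d) \<le> 2"
    and apart: "\<And>d d'. d \<in> D \<Longrightarrow> d' \<in> D \<Longrightarrow> d \<noteq> d' \<Longrightarrow> apart_from_line e \<delta> (\<phi> d - \<phi> d')"
    and \<delta>: "0 < \<delta>" "\<delta> \<le> 1" and \<rho>: "\<rho> = \<delta> / 16"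
    and s: "\<And>n. s n \<in> D" and s': "\<And>n. s' n \<in> D"
    and eq: "(\<Sum>n. \<rho> ^ n *\<^sub>R \<phi> (s n)) - (\<Sum>n. \<rho> ^ n *\<^sub>R \<phi> (s' n)) = \<mu> *\<^sub>R e"
  shows "s = s'"
proof (rule ccontr)
  assume "s \<noteq> s'"
  then have "\<exists>n. s n \<noteq> s' n" by auto
  define n where "n = (LEAST n. s n \<noteq> s' n)"
  have sn: "s n \<noteq> s' n"
    unfolding n_def using \<open>\<exists>n. s n \<noteq> s' n\<close> by (rule LeastI_ex)
  have before: "s m = s' m" if "m < n" for m
    using not_less_Least[of m "\<lambda>n. s n \<noteq> s' n"] that unfolding n_def by blast
  have \<rho>_pos: "\<rho> > 0" and \<rho>_small: "\<rho> \<le> 1/16" using \<rho> \<delta> by auto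
  have geom: "summable (\<lambda>m. C * \<rho> ^ m)" for C :: real
    using \<rho>_pos \<rho>_small by (intro summable_mult summable_geometric) auto
  have term_bound: "norm (\<rho> ^ m *\<^sub>R \<phi> (t m)) \<le> 2 * \<rho> ^ m" if "\<And>m. t m \<in> D" for t m
    using mult_left_mono[OF bound[OF that], of "\<rho> ^ m"] \<rho>_pos by (simp add: mult.commute)
  define d where "d m = \<rho> ^ m *\<^sub>R (\<phi> (s m) - \<phi> (s' m))" for m
  have d_bound: "norm (d m) \<le> 4 * \<rho> ^ m" for m
    using term_bound[where t = s, OF s, of m] term_bound[where t = s', OF s', of m]
      norm_triangle_ineq4[of "\<rho> ^ m *\<^sub>R \<phi> (s m)" "\<rho> ^ m *\<^sub>R \<phi> (s' m)"]
    unfolding d_def scaleR_diff_right by linarith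
  have "summable d" by (rule summable_comparison_test'[OF geom d_bound])
  have "(\<Sum>m. d m) = \<mu> *\<^sub>R e"
    unfolding d_def scaleR_diff_right
    using eq suminf_diff[OF summable_comparison_test'[OF geom term_bound[where t = s, OF s]]
                            summable_comparison_test'[OF geom term_bound[where t = s', OF s']]] by simp
  moreover have "(\<Sum>m. d m) = (\<Sum>m. d (m + Suc n)) + sum d {..<Suc n}"
    by (rule suminf_split_initial_segment[OF \<open>summable d\<close>])
  moreover have "sum d {..<Suc n} = d n"
    using before unfolding d_def by (simp add: sum.lessThan_Suc)
  ultimately have tail: "d n - \<mu> *\<^sub>R e = - (\<Sum>m. d (m + Suc n))" by (simp add: algebra_simps)
  have "norm (\<Sum>m. d (m + Suc n)) \<le> 4 * \<rho> ^ Suc n / (1 - \<rho>)"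
    using d_bound \<rho>_pos \<rho>_small by (intro norm_suminf_tail_le_geometric) auto
  also have "\<dots> \<le> 8 * \<rho> ^ Suc n"
    using \<rho>_pos \<rho>_small by (simp add: divide_simps)
  also have "\<dots> = \<rho> ^ n * (\<delta> / 2)" using \<rho> by simp
  also have "\<dots> < \<rho> ^ n * \<delta>" using \<rho>_pos \<delta> by simp
  finally have upper: "norm (d n - \<mu> *\<^sub>R e) < \<rho> ^ n * \<delta>" using tail by simp
  have "d n - \<mu> *\<^sub>R e = \<rho> ^ n *\<^sub>R (\<phi> (s n) - \<phi> (s' n) - (\<mu> / \<rho> ^ n) *\<^sub>R e)"
    unfolding d_def using \<rho>_pos by (simp add: algebra_simps)
  then have "norm (d n - \<mu> *\<^sub>R e) \<ge> \<rho> ^ n * \<delta>"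
    using apart[OF s s' sn] \<rho>_pos unfolding apart_from_line_def by (simp add: mult_left_mono)
  then show False using upper by simp
qed

lemma perturbed_net_apart_from_line:
  fixes e w :: "'a::real_normed_vector"
  assumes B: "B \<subseteq> cball 0 1" "pairwise (\<lambda>a b. apart_from_line e (1/4) (a - b)) B"
    and w: "apart_from_line e \<kappa> w" "0 \<le> \<kappa>" and \<alpha>_pos: "0 < \<alpha>" and \<alpha>w: "\<alpha> * norm w \<le> 1/144"
    and d: "d \<in> B \<times> {k. \<bar>k\<bar> \<le> 9}" and d': "d' \<in> B \<times> {k. \<bar>k\<bar> \<le> 9}"
  defines "\<phi> \<equiv> \<lambda>(b, k::int). b + (k * \<alpha>) *\<^sub>R w"
  shows "norm (\<phi> d) \<le> 2"
    and "d \<noteq> d' \<Longrightarrow> apart_from_line e (min (1/8) (\<alpha> * \<kappa>)) (\<phi> d - \<phi> d')"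
proof -
  have perturbation: "norm ((k * \<alpha>) *\<^sub>R w) \<le> 1/8" if "\<bar>k\<bar> \<le> 18" for k :: real
  proof -
    have "norm ((k * \<alpha>) *\<^sub>R w) = \<bar>k\<bar> * (\<alpha> * norm w)" using \<alpha>_pos by (simp add: abs_mult)
    also have "\<dots> \<le> 18 * (1/144)" using \<alpha>w that \<alpha>_pos by (intro mult_mono) auto
    finally show ?thesis by simp
  qed
  obtain b k b' k' where bk: "d = (b, k)" "d' = (b', k')" by (cases d, cases d')
  have b: "b \<in> B" "norm b \<le> 1" "\<bar>k\<bar> \<le> 9" and b': "b' \<in> B" "\<bar>k'\<bar> \<le> 9"
    using d d' B(1) bk by auto
  have "\<bar>real_of_int k\<bar> \<le> 18" using b(3) by linarith
  then show "norm (\<phi> d) \<le> 2"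
    using norm_triangle_ineq[of b "(k * \<alpha>) *\<^sub>R w"] perturbation[of k] b(2) bk
    unfolding \<phi>_def by simp
  assume "d \<noteq> d'"
  have diff: "\<phi> d - \<phi> d' = (b - b') + ((k - k') * \<alpha>) *\<^sub>R w"
    unfolding \<phi>_def bk by (simp add: algebra_simps)
  have "apart_from_line e (1/8) (\<phi> d - \<phi> d') \<or> apart_from_line e (\<alpha> * \<kappa>) (\<phi> d - \<phi> d')"
  proof (cases "b = b'")
    case True
    then have "k \<noteq> k'" using \<open>d \<noteq> d'\<close> bk by simp
    then have "\<alpha> \<le> \<bar>(k - k') * \<alpha>\<bar>" using \<alpha>_pos by (simp add: abs_mult)
    then show ?thesis using apart_from_line_scaleR[OF w] True diff by auto
  next
    case False
    then have "apart_from_line e (1/4) (b - b')" using B(2) b(1) b'(1) unfolding pairwise_def by blast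
    moreover have "\<bar>real_of_int (k - k')\<bar> \<le> 18" using b(3) b'(2) by linarith
    ultimately show ?thesis
      using apart_from_line_add[OF _ perturbation] diff by fastforce
  qed
  then show "apart_from_line e (min (1/8) (\<alpha> * \<kappa>)) (\<phi> d - \<phi> d')"
    unfolding apart_from_line_def by (meson min.coboundedI1 min.coboundedI2 order.trans)
qed

lemma inj_scaleR_one_plus_norm: "inj (\<lambda>y::'a::real_normed_vector. y /\<^sub>R (1 + norm y))"
proof (rule injI)
  fix x y :: 'a
  assume eq: "x /\<^sub>R (1 + norm x) = y /\<^sub>R (1 + norm y)"
  have pos: "1 + norm x > 0" "1 + norm y > 0" by (simp_all add: add_pos_nonneg)
  have "norm x / (1 + norm x) = norm y / (1 + norm y)"
    using arg_cong[OF eq, of norm] pos by (simp add: divide_inverse_commute)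
  then have "norm x = norm y" using pos by (simp add: divide_simps algebra_simps)
  then show "x = y" using eq pos by simp
qed

lemma norm_scaleR_one_plus_norm_le: "norm (y /\<^sub>R (1 + norm y)) \<le> 1"
  by (simp add: divide_simps add_pos_nonneg)

lemma inj_sequences_into_digit_sequences:
  fixes code :: "'a::real_normed_vector \<Rightarrow> nat \<Rightarrow> 'd"
  assumes "inj_on code (cball 0 1)" "\<And>r n. r \<in> cball 0 1 \<Longrightarrow> code r n \<in> D"
  obtains J :: "(nat \<Rightarrow> 'a) \<Rightarrow> nat \<Rightarrow> 'd" where "inj J" "\<And>S n. J S n \<in> D"
proof -
  define sq where "sq y = y /\<^sub>R (1 + norm y)" for y :: 'a
  have sq: "sq y \<in> cball 0 1" for y
    using norm_scaleR_one_plus_norm_le unfolding sq_def by simp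
  define J where "J S m = (case prod_decode m of (i, l) \<Rightarrow> code (sq (S i)) l)" for S m
  have "J S m \<in> D" for S m
    unfolding J_def using assms(2)[OF sq] by (simp split: prod.split)
  moreover have "inj J"
  proof (rule injI, rule ext)
    fix S S' i assume eq: "J S = J S'"
    have "code (sq (S i)) l = code (sq (S' i)) l" for l
      using fun_cong[OF eq, of "prod_encode (i, l)"] unfolding J_def by simp
    then have "sq (S i) = sq (S' i)"
      using inj_onD[OF assms(1)] sq by blast
    then show "S i = S' i"
      using inj_scaleR_one_plus_norm unfolding sq_def by (auto dest: injD)
  qed
  ultimately show thesis using that by blast
qed

lemma digit_sequences_apart_from_line:
  fixes e w :: "'a::real_normed_vector"
  assumes e: "norm e = 1" and w: "\<And>t. w \<noteq> t *\<^sub>R e"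
  obtains D :: "('a::real_normed_vector \<times> int) set" and \<phi> \<delta> and J :: "(nat \<Rightarrow> 'a) \<Rightarrow> nat \<Rightarrow> 'a \<times> int"
  where "\<And>d. d \<in> D \<Longrightarrow> norm (\<phi> d) \<le> 2"
    "\<And>d d'. d \<in> D \<Longrightarrow> d' \<in> D \<Longrightarrow> d \<noteq> d' \<Longrightarrow> apart_from_line e \<delta> (\<phi> d - \<phi> d')"
    "0 < \<delta>" "\<delta> \<le> 1" "inj J" "\<And>S n. J S n \<in> D"
proof -
  obtain B where B: "B \<subseteq> cball 0 1" "pairwise (\<lambda>a b. apart_from_line e (1/4) (a - b)) B"
    and net: "\<And>r. r \<in> cball 0 1 \<Longrightarrow> \<exists>b\<in>B. \<exists>k. \<bar>k\<bar> \<le> (9::int) \<and> norm (r - (b + (k / 4) *\<^sub>R e)) \<le> 1/2"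
    by (rule unit_ball_net_mod_line[OF e]) blast
  obtain \<kappa> where \<kappa>: "\<kappa> > 0" "apart_from_line e \<kappa> w"
    by (rule apart_from_line_exists[OF e w])
  \<comment> \<open>a digit is a net point together with a coordinate along e; \<phi> trades that coordinate
    for a small multiple of w, which keeps distinct digits apart from the line through e\<close>
  define D where "D = B \<times> {k::int. \<bar>k\<bar> \<le> 9}"
  define \<alpha> where "\<alpha> = 1 / (144 * (norm w + 1))"
  define \<phi> where "\<phi> = (\<lambda>(b, k::int). b + (k * \<alpha>) *\<^sub>R w)"
  define \<delta> where "\<delta> = min (1/8) (\<alpha> * \<kappa>)"
  have "norm w + 1 > 0" using norm_ge_zero[of w] by linarith
  then have \<alpha>: "0 < \<alpha>" "\<alpha> * norm w \<le> 1/144"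
    unfolding \<alpha>_def by (simp_all add: divide_simps)
  then have \<delta>: "0 < \<delta>" "\<delta> \<le> 1" using \<kappa>(1) unfolding \<delta>_def by auto
  have bound: "norm (\<phi> d) \<le> 2" if "d \<in> D" for d
    using perturbed_net_apart_from_line(1)[OF B \<kappa>(2) _ \<alpha>] \<kappa>(1) that
    unfolding D_def \<phi>_def by fastforce
  have apart: "apart_from_line e \<delta> (\<phi> d - \<phi> d')" if "d \<in> D" "d' \<in> D" "d \<noteq> d'" for d d'
    using perturbed_net_apart_from_line(2)[OF B \<kappa>(2) _ \<alpha>] \<kappa>(1) that
    unfolding D_def \<phi>_def \<delta>_def by fastforce
  have "\<exists>d\<in>D. norm (r - (\<lambda>(b, k). b + (real_of_int k / 4) *\<^sub>R e) d) \<le> 1/2"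
    if "r \<in> cball 0 1" for r
    using net[OF that] unfolding D_def by fastforce
  then obtain code :: "'a \<Rightarrow> nat \<Rightarrow> 'a \<times> int"
    where code: "inj_on code (cball 0 1)" "\<And>r n. r \<in> cball 0 1 \<Longrightarrow> code r n \<in> D"
    using inj_on_digit_expansion by blast
  obtain J :: "(nat \<Rightarrow> 'a) \<Rightarrow> nat \<Rightarrow> 'a \<times> int" where J: "inj J" "\<And>S n. J S n \<in> D"
    using inj_sequences_into_digit_sequences[OF code] by metis
  show thesis by (rule that[OF bound apart \<delta> J]) auto
qed

lemma inj_sequences_mod_line:
  fixes e w :: "'a::banach"
  assumes e: "norm e = 1" and w: "\<And>t. w \<noteq> t *\<^sub>R e"
  obtains V :: "(nat \<Rightarrow> 'a) \<Rightarrow> 'a"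
  where "\<And>S. norm (V S) \<le> 1" "\<And>S S' \<mu>. V S - V S' = \<mu> *\<^sub>R e \<Longrightarrow> S = S'"
proof -
  obtain D :: "('a \<times> int) set" and \<phi> \<delta> and J :: "(nat \<Rightarrow> 'a) \<Rightarrow> nat \<Rightarrow> 'a \<times> int"
    where bound: "\<And>d. d \<in> D \<Longrightarrow> norm (\<phi> d) \<le> 2"
      and apart: "\<And>d d'. d \<in> D \<Longrightarrow> d' \<in> D \<Longrightarrow> d \<noteq> d' \<Longrightarrow> apart_from_line e \<delta> (\<phi> d - \<phi> d')"
      and \<delta>: "0 < \<delta>" "\<delta> \<le> 1" and J: "inj J" "\<And>S n. J S n \<in> D"
    by (rule digit_sequences_apart_from_line[OF e w]) blast
  define \<rho> where "\<rho> = \<delta> / 16"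
  have \<rho>: "0 \<le> \<rho>" "\<rho> \<le> 1/2" using \<delta> unfolding \<rho>_def by auto
  define V where "V S = (1/4) *\<^sub>R (\<Sum>n. \<rho> ^ n *\<^sub>R \<phi> (J S n))" for S
  have "norm (V S) \<le> 1" for S
  proof -
    have "norm (\<rho> ^ n *\<^sub>R \<phi> (J S n)) \<le> 2 * \<rho> ^ n" for n
      using mult_left_mono[OF bound[OF J(2)], of "\<rho> ^ n" S n] \<rho> by (simp add: mult.commute)
    then have "norm (\<Sum>n. \<rho> ^ n *\<^sub>R \<phi> (J S n)) \<le> 2 / (1 - \<rho>)"
      using norm_suminf_tail_le_geometric[of "\<lambda>n. \<rho> ^ n *\<^sub>R \<phi> (J S n)" 2 \<rho> 0] \<rho> by simp
    also have "\<dots> \<le> 4" using \<rho> by (simp add: divide_simps)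
    finally show ?thesis unfolding V_def by simp
  qed
  moreover have "S = S'" if "V S - V S' = \<mu> *\<^sub>R e" for S S' \<mu>
  proof -
    have series: "(\<Sum>n. \<rho> ^ n *\<^sub>R \<phi> (J S n)) - (\<Sum>n. \<rho> ^ n *\<^sub>R \<phi> (J S' n)) = (4 * \<mu>) *\<^sub>R e"
      using arg_cong[OF that, of "scaleR 4"] unfolding V_def by (simp add: scaleR_diff_right)
    have "J S = J S'"
      by (rule geometric_digit_series_unique_mod_line[OF bound apart \<delta> \<rho>_def J(2) J(2) series])
    then show ?thesis by (rule injD[OF J(1)])
  qed
  ultimately show thesis using that by blast
qed

lemma exists_unit_on_shifted_line:
  fixes e u :: "'a::real_normed_vector"
  assumes e: "norm e = 1" and \<eta>: "0 < \<eta>" "\<eta> < 1" and u: "norm u \<le> \<eta>"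
  shows "\<exists>t. \<bar>t\<bar> \<le> \<eta> \<and> norm ((1 + t) *\<^sub>R e + u) = 1"
proof -
  define g where "g t = norm ((1 + t) *\<^sub>R e + u)" for t
  have "continuous_on {-\<eta>..\<eta>} g" unfolding g_def by (intro continuous_intros)
  moreover have "g (-\<eta>) \<le> 1"
    using norm_triangle_ineq[of "(1 - \<eta>) *\<^sub>R e" u] e \<eta> u unfolding g_def by simp
  moreover have "g \<eta> \<ge> 1"
    using norm_triangle_ineq4[of "(1 + \<eta>) *\<^sub>R e + u" u] e \<eta> u unfolding g_def by simp
  ultimately obtain t where "t \<in> {-\<eta>..\<eta>}" "g t = 1"
    using IVT'[of g "-\<eta>" 1 \<eta>] \<eta> by auto
  then show ?thesis unfolding g_def by (intro exI[of _ t]) auto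
qed

lemma inj_sequences_into_sphere_cap:
  fixes e :: "'a::banach"
  assumes e: "norm e = 1" and w: "\<And>t. w \<noteq> t *\<^sub>R e" and \<epsilon>: "\<epsilon> > 0"
  obtains j :: "(nat \<Rightarrow> 'a) \<Rightarrow> 'a" where "inj j" "\<And>S. norm (j S) = 1" "\<And>S. norm (j S - e) \<le> \<epsilon>"
proof -
  obtain V :: "(nat \<Rightarrow> 'a) \<Rightarrow> 'a"
    where V: "\<And>S. norm (V S) \<le> 1" "\<And>S S' \<mu>. V S - V S' = \<mu> *\<^sub>R e \<Longrightarrow> S = S'"
    by (rule inj_sequences_mod_line[OF e w]) blast
  define \<eta> where "\<eta> = min (\<epsilon> / 2) (1/2)"
  have \<eta>: "0 < \<eta>" "\<eta> < 1" using \<epsilon> unfolding \<eta>_def by auto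
  have "\<exists>t. \<bar>t\<bar> \<le> \<eta> \<and> norm ((1 + t) *\<^sub>R e + \<eta> *\<^sub>R V S) = 1" for S
    using exists_unit_on_shifted_line[OF e \<eta>] V(1)[of S] \<eta> by (simp add: mult_left_le)
  then obtain t where t: "\<And>S. \<bar>t S\<bar> \<le> \<eta> \<and> norm ((1 + t S) *\<^sub>R e + \<eta> *\<^sub>R V S) = 1"
    by metis
  define j where "j S = (1 + t S) *\<^sub>R e + \<eta> *\<^sub>R V S" for S
  have "inj j"
  proof (rule injI)
    fix S S' assume "j S = j S'"
    then have "\<eta> *\<^sub>R (V S - V S') = (t S' - t S) *\<^sub>R e"
      unfolding j_def by (simp add: algebra_simps)
    then have "(1 / \<eta>) *\<^sub>R (\<eta> *\<^sub>R (V S - V S')) = (1 / \<eta>) *\<^sub>R ((t S' - t S) *\<^sub>R e)"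
      by simp
    then have "V S - V S' = ((t S' - t S) / \<eta>) *\<^sub>R e"
      using \<eta> by simp
    then show "S = S'" by (rule V(2))
  qed
  moreover have "norm (j S - e) \<le> \<epsilon>" for S
  proof -
    have "norm (j S - e) = norm (t S *\<^sub>R e + \<eta> *\<^sub>R V S)" unfolding j_def by (simp add: algebra_simps)
    also have "\<dots> \<le> \<bar>t S\<bar> + \<eta> * norm (V S)"
      using norm_triangle_ineq[of "t S *\<^sub>R e" "\<eta> *\<^sub>R V S"] e \<eta> by simp
    also have "\<dots> \<le> 2 * \<eta>"
      using t[of S] mult_left_le[OF V(1)[of S], of \<eta>] \<eta> by linarith
    also have "\<dots> \<le> \<epsilon>" unfolding \<eta>_def by simp
    finally show ?thesis .
  qed
  ultimately show thesis using that t unfolding j_def by blast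
qed

section \<open>Bijections between the unit spheres\<close>

lemma inj_orbit_readout:
  fixes step :: "'a::real_normed_vector \<Rightarrow> 'a" and readout :: "'a \<Rightarrow> 'b"
  assumes contract: "\<And>a. norm (step a) \<le> q * norm a" and q: "0 \<le> q" "q < 1"
    and step_diff: "\<And>a a'. readout a = readout a' \<Longrightarrow> step a - step a' = a - a'"
  shows "inj (\<lambda>x n. readout ((step ^^ n) x))"
proof (rule injI)
  fix x x' assume eq: "(\<lambda>n. readout ((step ^^ n) x)) = (\<lambda>n. readout ((step ^^ n) x'))"
  have orbit: "norm ((step ^^ n) x) \<le> q ^ n * norm x" for x n
  proof (induction n)
    case (Suc n)
    have "norm ((step ^^ Suc n) x) \<le> q * norm ((step ^^ n) x)" using contract by simp
    also have "\<dots> \<le> q * (q ^ n * norm x)" using Suc q by (intro mult_left_mono) auto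
    finally show ?case by (simp add: mult.assoc)
  qed simp
  have same_diff: "(step ^^ n) x - (step ^^ n) x' = x - x'" for n
  proof (induction n)
    case (Suc n)
    have "readout ((step ^^ n) x) = readout ((step ^^ n) x')" using eq by metis
    then show ?case using Suc step_diff by simp
  qed simp
  have bound: "norm (x - x') \<le> q ^ n * (norm x + norm x')" for n
    using same_diff[of n] norm_triangle_ineq4[of "(step ^^ n) x" "(step ^^ n) x'"]
      orbit[of n x] orbit[of n x'] by (simp add: distrib_left)
  have "(\<lambda>n. q ^ n * (norm x + norm x')) \<longlonglongrightarrow> 0"
    using q by (intro tendsto_mult_left_zero LIMSEQ_power_zero) auto
  then have "norm (x - x') \<le> 0"
    by (rule LIMSEQ_le_const) (use bound in blast)
  then show "x = x'" by simp
qed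

lemma inj_into_sequences:
  fixes N :: "'a::real_normed_vector \<times> 'b::real_normed_vector \<Rightarrow> real"
  assumes N: "compatible_seminorm N" and close: "unit_spheres_close N c" and c: "0 \<le> c" "c < 1/2"
  obtains enc :: "'a \<Rightarrow> nat \<Rightarrow> 'b" where "inj enc"
proof -
  obtain F :: "'a \<Rightarrow> 'b" where F: "\<And>x. norm x = 1 \<Longrightarrow> norm (F x) = 1 \<and> N (x, - F x) \<le> c"
    using unit_spheres_closeE[OF close] by metis
  obtain G :: "'b \<Rightarrow> 'a"
    where G: "\<And>y. norm y = 1 \<Longrightarrow> norm (G y) = 1 \<and> swap_seminorm N (y, - G y) \<le> c"
    using unit_spheres_closeE[OF unit_spheres_close_swap[OF N close]] by metis
  define Ft where "Ft = radial_extension F"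
  define Gt where "Gt = radial_extension G"
  have Ft: "norm (Ft x) = norm x" "N (x, - Ft x) \<le> c * norm x" for x
    unfolding Ft_def using F by (auto intro: norm_radial_extension radial_extension_close[OF N])
  have Gt: "N (Gt y, - y) \<le> c * norm y" for y
    using radial_extension_close[OF compatible_seminorm_swap[OF N], of G c y] G
    unfolding Gt_def swap_seminorm_neg[OF N] by blast
  have contract: "norm (a - Gt (Ft a)) \<le> (2 * c) * norm a" for a
  proof -
    have "norm (a - Gt (Ft a)) = N ((a, - Ft a) + - (Gt (Ft a), - Ft a))"
      using compatible_seminormD(4)[OF N, of "a - Gt (Ft a)"] by simp
    also have "\<dots> \<le> N (a, - Ft a) + N (Gt (Ft a), - Ft a)"
      using compatible_seminormD(2)[OF N] compatible_seminorm_minus[OF N] by metis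
    also have "\<dots> \<le> (2 * c) * norm a" using Ft[of a] Gt[of "Ft a"] by simp
    finally show ?thesis .
  qed
  have "inj (\<lambda>x n. Ft (((\<lambda>a. a - Gt (Ft a)) ^^ n) x))"
    by (rule inj_orbit_readout[OF contract]) (use c in auto)
  then show thesis by (rule that)
qed

lemma sphere_cap_injections:
  assumes not_line: "\<not> dim_le_one TYPE('a::banach)" and \<epsilon>: "\<epsilon> > 0"
  obtains J :: "'a::banach \<Rightarrow> (nat \<Rightarrow> 'a) \<Rightarrow> 'a"
  where "\<And>e. e \<in> sphere 0 1 \<Longrightarrow> inj (J e) \<and> (\<forall>S. norm (J e S) = 1 \<and> norm (J e S - e) \<le> \<epsilon>)"
proof -
  have "\<exists>j :: (nat \<Rightarrow> 'a) \<Rightarrow> 'a. inj j \<and> (\<forall>S. norm (j S) = 1 \<and> norm (j S - e) \<le> \<epsilon>)"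
    if "e \<in> sphere 0 1" for e
  proof -
    obtain w :: 'a where "\<And>t. w \<noteq> t *\<^sub>R e" using not_line unfolding dim_le_one_def by blast
    with that \<epsilon> show ?thesis by (metis inj_sequences_into_sphere_cap mem_sphere_0)
  qed
  then show thesis using that by metis
qed

lemma inj_on_sphere_close:
  fixes N :: "'a::real_normed_vector \<times> 'b::banach \<Rightarrow> real"
  assumes N: "compatible_seminorm N" and close: "unit_spheres_close N c" and c: "0 \<le> c" "c < 1/2"
    and not_line: "\<not> dim_le_one TYPE('b)" and r: "r > 0"
  obtains h :: "'a \<Rightarrow> 'b" where "inj_on h (sphere 0 1)" "h ` sphere 0 1 \<subseteq> sphere 0 1"
    "\<And>x. x \<in> sphere 0 1 \<Longrightarrow> N (x, - h x) \<le> c + 2 * r"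
proof -
  obtain enc :: "'a \<Rightarrow> nat \<Rightarrow> 'b" where enc: "inj enc"
    by (rule inj_into_sequences[OF N close c]) blast
  obtain E :: "'b set" where E: "E \<subseteq> sphere 0 1" "pairwise (\<lambda>a b. r \<le> dist a b) E"
    and net: "\<And>y. y \<in> sphere 0 1 \<Longrightarrow> \<exists>a\<in>E. dist y a < r"
    by (rule exists_separated_net[OF r]) blast
  obtain J :: "'b \<Rightarrow> (nat \<Rightarrow> 'b) \<Rightarrow> 'b"
    where J: "\<And>e. e \<in> sphere 0 1 \<Longrightarrow> inj (J e) \<and> (\<forall>S. norm (J e S) = 1 \<and> norm (J e S - e) \<le> r / 3)"
    using sphere_cap_injections[OF not_line, of "r / 3"] r by auto
  obtain F :: "'a \<Rightarrow> 'b" where F: "\<And>x. norm x = 1 \<Longrightarrow> norm (F x) = 1 \<and> N (x, - F x) \<le> c"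
    using unit_spheres_closeE[OF close] by metis
  have "\<exists>a\<in>E. norm (F x - a) < r" if "norm x = 1" for x
    using net[of "F x"] F[OF that] by (simp add: dist_norm)
  then obtain pick where pick: "\<And>x. norm x = 1 \<Longrightarrow> pick x \<in> E \<and> norm (F x - pick x) < r"
    by metis
  have pick_sphere: "pick x \<in> sphere 0 1" if "norm x = 1" for x
    using pick[OF that] E(1) by blast
  define h where "h x = J (pick x) (enc x)" for x
  have h_near: "norm (h x - pick x) \<le> r / 3" if "norm x = 1" for x
    using J[OF pick_sphere[OF that]] unfolding h_def by blast
  have "inj_on h (sphere 0 1)"
  proof (rule inj_onI)
    fix x x' assume x: "x \<in> sphere 0 1" and x': "x' \<in> sphere 0 1" and eq: "h x = h x'"
    have "norm (pick x - pick x') \<le> norm (h x - pick x) + norm (h x' - pick x')"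
      using eq norm_triangle_ineq4[of "h x - pick x" "h x' - pick x'"] by (simp add: norm_minus_commute)
    also have "\<dots> < r" using h_near[of x] h_near[of x'] x x' r by simp
    finally have "pick x = pick x'"
      using E(2) pick x x' unfolding pairwise_def dist_norm by fastforce
    moreover have "inj (J (pick x))" using J[OF pick_sphere] x by simp
    ultimately have "enc x = enc x'"
      using eq unfolding h_def by (metis injD)
    then show "x = x'" by (rule injD[OF enc])
  qed
  moreover have "h ` sphere 0 1 \<subseteq> sphere 0 1"
    using J pick_sphere unfolding h_def by auto
  moreover have "N (x, - h x) \<le> c + 2 * r" if x: "x \<in> sphere 0 1" for x
  proof -
    have "N (x, - h x) \<le> N (x, - F x) + norm (F x - h x)"
      using compatible_seminorm_shift_right[OF N, of x "- h x" "- F x"] by simp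
    also have "norm (F x - h x) \<le> norm (F x - pick x) + norm (h x - pick x)"
      using norm_triangle_ineq4[of "F x - pick x" "h x - pick x"] by simp
    finally show ?thesis using F[of x] pick[of x] h_near[of x] x r by fastforce
  qed
  ultimately show thesis using that by blast
qed

lemma sphere_bij_close:
  fixes N :: "'a::banach \<times> 'b::banach \<Rightarrow> real"
  assumes N: "compatible_seminorm N" and close: "unit_spheres_close N c" and c: "0 \<le> c" "c < 1/2"
    and r: "r > 0"
  obtains \<beta> where "bij_betw \<beta> (sphere (0::'a) 1) (sphere (0::'b) 1)"
    "\<And>x. x \<in> sphere 0 1 \<Longrightarrow> N (x, - \<beta> x) \<le> c + 2 * r"
proof (cases "dim_le_one TYPE('a) \<or> dim_le_one TYPE('b)")
  case True
  have "dim_le_one TYPE('a)" "dim_le_one TYPE('b)"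
    using True dim_le_one_transfer[OF N close c(2)]
      dim_le_one_transfer[OF compatible_seminorm_swap[OF N] unit_spheres_close_swap[OF N close] c(2)]
    by blast+
  then obtain \<beta> where "bij_betw \<beta> (sphere (0::'a) 1) (sphere (0::'b) 1)"
    "\<And>x. x \<in> sphere 0 1 \<Longrightarrow> N (x, - \<beta> x) \<le> c"
    using dim_le_one_sphere_bij[OF N close] by blast
  then show thesis using that r by force
next
  case False
  obtain f :: "'a \<Rightarrow> 'b" where f: "inj_on f (sphere 0 1)" "f ` sphere 0 1 \<subseteq> sphere 0 1"
    "\<And>x. x \<in> sphere 0 1 \<Longrightarrow> N (x, - f x) \<le> c + 2 * r"
    using inj_on_sphere_close[OF N close c _ r] False by blast
  obtain g :: "'b \<Rightarrow> 'a" where g: "inj_on g (sphere 0 1)" "g ` sphere 0 1 \<subseteq> sphere 0 1"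
    "\<And>y. y \<in> sphere 0 1 \<Longrightarrow> N (g y, - y) \<le> c + 2 * r"
    using inj_on_sphere_close[OF compatible_seminorm_swap[OF N] unit_spheres_close_swap[OF N close] c _ r]
      False unfolding swap_seminorm_neg[OF N] by blast
  obtain \<beta> where \<beta>: "bij_betw \<beta> (sphere (0::'a) 1) (sphere (0::'b) 1)"
    and from_f_or_g: "\<And>x. x \<in> sphere 0 1 \<Longrightarrow> \<beta> x = f x \<or> (\<beta> x \<in> sphere 0 1 \<and> g (\<beta> x) = x)"
    by (rule Schroeder_Bernstein_pointwise[OF f(1,2) g(1,2)]) blast
  have "N (x, - \<beta> x) \<le> c + 2 * r" if "x \<in> sphere 0 1" for x
    using from_f_or_g[OF that] f(3)[OF that] g(3)[of "\<beta> x"] by auto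
  then show thesis using that \<beta> by blast
qed

lemma norm_preserving_bij_close:
  fixes N :: "'a::banach \<times> 'b::banach \<Rightarrow> real"
  assumes N: "compatible_seminorm N" and close: "unit_spheres_close N c" and c: "0 \<le> c" "c < 1/2"
    and r: "r > 0"
  obtains \<Omega> :: "'a \<Rightarrow> 'b"
  where "bij \<Omega>" "\<And>x. norm (\<Omega> x) = norm x" "\<And>x. N (x, - \<Omega> x) \<le> (c + 2 * r) * norm x"
proof -
  obtain \<beta> where \<beta>: "bij_betw \<beta> (sphere (0::'a) 1) (sphere (0::'b) 1)"
    and \<beta>_close: "\<And>x. x \<in> sphere 0 1 \<Longrightarrow> N (x, - \<beta> x) \<le> c + 2 * r"
    by (rule sphere_bij_close[OF N close c r]) blast
  show thesis
  proof
    show "bij (radial_extension \<beta>)" using \<beta> by (rule bij_radial_extension)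
    show "norm (radial_extension \<beta> x) = norm x" for x
      using bij_betwE[OF \<beta>] by (intro norm_radial_extension) simp
    show "N (x, - radial_extension \<beta> x) \<le> (c + 2 * r) * norm x" for x
      using \<beta>_close by (intro radial_extension_close[OF N]) simp
  qed
qed

theorem theorem2p4:
  fixes \<sigma> :: real
  assumes "kadets_dist TYPE('a::banach) TYPE('b::banach) < \<sigma>"
      and "\<sigma> < 1/6"
  shows "\<exists>\<Omega> :: 'a \<Rightarrow> 'b. bij \<Omega> \<and> (\<forall>x. norm (\<Omega> x) = norm x) \<and>
           (\<forall>xs :: 'a list. \<bar>norm (\<Sum>x\<leftarrow>xs. \<Omega> x) - norm (\<Sum>x\<leftarrow>xs. x)\<bar>
                 \<le> 14 * \<sigma> * (\<Sum>x\<leftarrow>xs. norm x))"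
proof -
  obtain N :: "'a \<times> 'b \<Rightarrow> real" where N: "compatible_seminorm N" and "ball_hausdorff N < \<sigma>"
    using kadets_distE[OF assms(1)] by blast
  then have close: "unit_spheres_close N (2 * \<sigma>)"
    using unit_spheres_close_ball_hausdorff assms(2) by force
  have \<sigma>: "\<sigma> > 0" using kadets_dist_nonneg assms(1) by (metis le_less_trans)
  obtain \<Omega> :: "'a \<Rightarrow> 'b" where \<Omega>: "bij \<Omega>" "\<And>x. norm (\<Omega> x) = norm x"
    and \<Omega>_close: "\<And>x. N (x, - \<Omega> x) \<le> (2 * \<sigma> + 2 * (\<sigma> / 2)) * norm x"
    using norm_preserving_bij_close[OF N close, of "\<sigma> / 2"] \<sigma> assms(2) by auto
  have "\<bar>norm (\<Sum>x\<leftarrow>xs. \<Omega> x) - norm (\<Sum>x\<leftarrow>xs. x)\<bar> \<le> 14 * \<sigma> * (\<Sum>x\<leftarrow>xs. norm x)" for xs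
  proof -
    have "\<bar>norm (\<Sum>x\<leftarrow>xs. \<Omega> x) - norm (\<Sum>x\<leftarrow>xs. x)\<bar> \<le> (2 * \<sigma> + 2 * (\<sigma> / 2)) * (\<Sum>x\<leftarrow>xs. norm x)"
      by (rule sum_list_norm_deviation[OF N \<Omega>_close])
    also have "\<dots> \<le> 14 * \<sigma> * (\<Sum>x\<leftarrow>xs. norm x)"
      using \<sigma> by (intro mult_right_mono sum_list_nonneg) auto
    finally show ?thesis .
  qed
  with \<Omega> show ?thesis by blast
qed

end
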